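(* Let $\Sigma$ be a mixing one-sided subshift of finite type and $L,L'\in\mathrm{QM}(\mathscr W)$. Then $L\sim L'$ if and only if $\bar L(\mathbf a)=\bar L'(\mathbf a)$ for every periodic word $\mathbf a$. Consequently $L\sim L'$ if and only if the restrictions of $L$ and $L'$ to periodic words differ by a bounded function.
   Context: $\Sigma=\{(x_n)_{n\ge0}:R_{x_nx_{n+1}}=1\}$ for an irreducible aperiodic $0/1$ matrix $R$ on alphabet $\mathscr A=\{1,\dots,d\}$. $\mathscr W$ is the set of finite allowed words (including the empty word), concatenation $\mathbf a\mathbf b$ being defined when allowed. $L:\mathscr W\to\mathbb R$ is a quasimorphism ($L\in\mathrm{QM}(\mathscr W)$) if $\sup|L(\mathbf a\mathbf b)-L(\mathbf a)-L(\mathbf b)|<\infty$ over concatenable pairs. $L\sim L'$ if $L-L'$ is bounded on $\mathscr W$. A nonempty word $\mathbf a=a_1\cdots a_n$ is periodic if $R_{a_na_1}=1$; for such $\mathbf a$, $\bar L(\mathbf a)=\lim_{k\to\infty}L(\mathbf a^k)/k$, where $\mathbf a^k$ is the $k$-fold concatenation. *)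

theory Defs
  imports Complex_Main
begin

text \<open>Alphabet {1..d}; the 0/1 transition matrix R is encoded as a relation:
  R i j = True iff R_{ij} = 1.\<close>

definition alphabet :: "nat \<Rightarrow> nat set" where
  "alphabet d = {1..d}"

definition allowed :: "nat \<Rightarrow> (nat \<Rightarrow> nat \<Rightarrow> bool) \<Rightarrow> nat list \<Rightarrow> bool" where
  "allowed d R w \<longleftrightarrow> set w \<subseteq> alphabet d \<and> (\<forall>i. Suc i < length w \<longrightarrow> R (w ! i) (w ! Suc i))"

definition words :: "nat \<Rightarrow> (nat \<Rightarrow> nat \<Rightarrow> bool) \<Rightarrow> nat list set" where
  "words d R = {w. allowed d R w}"

text \<open>(R^n)_{ij} > 0, i.e. there is an allowed path of n steps from i to j.\<close>
definition mat_pow_pos :: "nat \<Rightarrow> (nat \<Rightarrow> nat \<Rightarrow> bool) \<Rightarrow> nat \<Rightarrow> nat \<Rightarrow> nat \<Rightarrow> bool" where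
  "mat_pow_pos d R n i j \<longleftrightarrow>
     (\<exists>w. length w = Suc n \<and> allowed d R w \<and> hd w = i \<and> last w = j)"

definition irreducible_mat :: "nat \<Rightarrow> (nat \<Rightarrow> nat \<Rightarrow> bool) \<Rightarrow> bool" where
  "irreducible_mat d R \<longleftrightarrow>
     (\<forall>i\<in>alphabet d. \<forall>j\<in>alphabet d. \<exists>n>0. mat_pow_pos d R n i j)"

definition aperiodic_mat :: "nat \<Rightarrow> (nat \<Rightarrow> nat \<Rightarrow> bool) \<Rightarrow> bool" where
  "aperiodic_mat d R \<longleftrightarrow>
     (\<forall>i\<in>alphabet d. Gcd {n. n > 0 \<and> mat_pow_pos d R n i i} = 1)"

definition quasimorphism :: "nat \<Rightarrow> (nat \<Rightarrow> nat \<Rightarrow> bool) \<Rightarrow> (nat list \<Rightarrow> real) \<Rightarrow> bool" where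
  "quasimorphism d R L \<longleftrightarrow>
     (\<exists>C. \<forall>a b. a \<in> words d R \<longrightarrow> b \<in> words d R \<longrightarrow> a @ b \<in> words d R \<longrightarrow>
            \<bar>L (a @ b) - L a - L b\<bar> \<le> C)"

definition qm_equiv :: "nat \<Rightarrow> (nat \<Rightarrow> nat \<Rightarrow> bool) \<Rightarrow> (nat list \<Rightarrow> real) \<Rightarrow> (nat list \<Rightarrow> real) \<Rightarrow> bool" where
  "qm_equiv d R L L' \<longleftrightarrow> (\<exists>C. \<forall>w \<in> words d R. \<bar>L w - L' w\<bar> \<le> C)"

definition periodic_word :: "nat \<Rightarrow> (nat \<Rightarrow> nat \<Rightarrow> bool) \<Rightarrow> nat list \<Rightarrow> bool" where
  "periodic_word d R a \<longleftrightarrow> a \<noteq> [] \<and> a \<in> words d R \<and> R (last a) (hd a)"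

definition word_pow :: "nat list \<Rightarrow> nat \<Rightarrow> nat list" where
  "word_pow a k = concat (replicate k a)"

definition Lbar :: "(nat list \<Rightarrow> real) \<Rightarrow> nat list \<Rightarrow> real" where
  "Lbar L a = lim (\<lambda>k. L (word_pow a k) / real k)"

end

theory Submission
  imports Defs
begin

text \<open>The difference \<open>Q = L - L'\<close> is again a quasimorphism, say with defect \<open>C\<close>. Since
  \<open>Q(a\<^sup>k)\<close> and \<open>k Q(a)\<close> differ by at most \<open>(k+1)C\<close>, the homogenization satisfies
  \<open>\<bar>Lbar Q a - Q a\<bar> \<le> 2C\<close> on periodic words, so \<open>Lbar Q = 0\<close> there forces \<open>Q\<close> to be bounded
  on periodic words; conversely a bounded \<open>Q\<close> has \<open>Lbar Q = 0\<close>. By irreducibility every allowed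
  word \<open>w\<close> closes up into a periodic word \<open>w u\<close> with \<open>u\<close> drawn from a fixed finite set of
  connecting words, so by quasi-additivity a bound on periodic words is a bound on all words.\<close>

lemma allowed_Cons:
  "allowed d R (x # xs) \<longleftrightarrow> x \<in> alphabet d \<and> allowed d R xs \<and> (xs \<noteq> [] \<longrightarrow> R x (hd xs))"
proof -
  have "(\<forall>i. Suc i < length (x # xs) \<longrightarrow> R ((x # xs) ! i) ((x # xs) ! Suc i)) \<longleftrightarrow>
        (xs \<noteq> [] \<longrightarrow> R x (hd xs)) \<and> (\<forall>i. Suc i < length xs \<longrightarrow> R (xs ! i) (xs ! Suc i))"
    (is "?steps \<longleftrightarrow> ?head \<and> ?tail")
  proof
    assume steps: ?steps
    have ?head using steps[rule_format, of 0] by (cases xs) auto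
    moreover have ?tail using steps by (metis Suc_less_eq length_Cons nth_Cons_Suc)
    ultimately show "?head \<and> ?tail" ..
  next
    assume "?head \<and> ?tail"
    then show ?steps by (auto simp: nth_Cons split: nat.split) (metis hd_conv_nth)
  qed
  then show ?thesis unfolding allowed_def by auto
qed

lemma allowed_Nil [simp]: "allowed d R []"
  by (simp add: allowed_def)

lemma allowed_append:
  "allowed d R (u @ v) \<longleftrightarrow>
     allowed d R u \<and> allowed d R v \<and> (u \<noteq> [] \<longrightarrow> v \<noteq> [] \<longrightarrow> R (last u) (hd v))"
  by (induction u) (auto simp: allowed_Cons)

lemma Nil_in_words [simp]: "[] \<in> words d R"
  by (simp add: words_def)

lemma word_pow_add: "word_pow a (m + n) = word_pow a m @ word_pow a n"
  by (simp add: word_pow_def replicate_add)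

lemma word_pow_in_words:
  assumes "periodic_word d R a"
  shows "word_pow a k \<in> words d R"
proof (induction k)
  case 0
  then show ?case by (simp add: word_pow_def)
next
  case (Suc k)
  have "hd (word_pow a k) = hd a" if "k > 0"
    using that assms by (cases k) (auto simp: word_pow_def periodic_word_def)
  then show ?case
    using Suc assms by (auto simp: words_def periodic_word_def allowed_append word_pow_def)
qed

lemma irreducible_connecting_word:
  assumes "irreducible_mat d R" and "i \<in> alphabet d" and "j \<in> alphabet d"
  shows "\<exists>u. allowed d R (i # u @ [j])"
proof -
  obtain n where "n > 0" "mat_pow_pos d R n i j"
    using assms unfolding irreducible_mat_def by blast
  then obtain p where p: "length p = Suc n" "allowed d R p" "hd p = i" "last p = j"
    unfolding mat_pow_pos_def by blast
  with \<open>n > 0\<close> have "p = i # butlast (tl p) @ [j]"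
    by (cases p) (auto simp: last_ConsR)
  with p(2) show ?thesis by metis
qed

lemma periodic_word_append_connecting:
  assumes w: "w \<in> words d R" "w \<noteq> []" and u: "allowed d R (last w # u @ [hd w])"
  shows "u \<in> words d R" and "periodic_word d R (w @ u)"
proof -
  have "allowed d R (butlast w @ [last w])"
    using w by (simp add: words_def)
  with u have "allowed d R (butlast w @ (last w # u @ [hd w]))"
    by (auto simp: allowed_append allowed_Cons)
  moreover have "butlast w @ (last w # u @ [hd w]) = (w @ u) @ [hd w]"
    using w(2) by (metis append_butlast_last_id append.assoc append_Cons append_Nil)
  ultimately have "allowed d R (w @ u)" and "R (last (w @ u)) (hd w)"
    using w(2) by (simp_all only: allowed_append) simp_all
  moreover have "allowed d R u"
    using u by (simp add: allowed_Cons allowed_append)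
  ultimately show "u \<in> words d R" "periodic_word d R (w @ u)"
    using w(2) by (auto simp: words_def periodic_word_def)
qed

definition qm_defect_le :: "nat \<Rightarrow> (nat \<Rightarrow> nat \<Rightarrow> bool) \<Rightarrow> (nat list \<Rightarrow> real) \<Rightarrow> real \<Rightarrow> bool" where
  "qm_defect_le d R Q C \<longleftrightarrow>
     (\<forall>a b. a \<in> words d R \<longrightarrow> b \<in> words d R \<longrightarrow> a @ b \<in> words d R \<longrightarrow>
            \<bar>Q (a @ b) - Q a - Q b\<bar> \<le> C)"

lemma quasimorphism_iff_defect_le: "quasimorphism d R Q \<longleftrightarrow> (\<exists>C. qm_defect_le d R Q C)"
  by (simp add: quasimorphism_def qm_defect_le_def)

lemma qm_defect_leD:
  "qm_defect_le d R Q C \<Longrightarrow> a \<in> words d R \<Longrightarrow> b \<in> words d R \<Longrightarrow> a @ b \<in> words d R \<Longrightarrow>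
     \<bar>Q (a @ b) - Q a - Q b\<bar> \<le> C"
  by (simp add: qm_defect_le_def)

lemma qm_defect_le_nonneg: "qm_defect_le d R Q C \<Longrightarrow> 0 \<le> C"
  using qm_defect_leD[of d R Q C "[]" "[]"] by simp

lemma qm_defect_le_diff:
  assumes "qm_defect_le d R Q C" and "qm_defect_le d R Q' C'"
  shows "qm_defect_le d R (\<lambda>w. Q w - Q' w) (C + C')"
  unfolding qm_defect_le_def
proof (intro allI impI)
  fix a b assume "a \<in> words d R" "b \<in> words d R" "a @ b \<in> words d R"
  with assms have "\<bar>Q (a @ b) - Q a - Q b\<bar> \<le> C" "\<bar>Q' (a @ b) - Q' a - Q' b\<bar> \<le> C'"
    by (auto intro: qm_defect_leD)
  then show "\<bar>Q (a @ b) - Q' (a @ b) - (Q a - Q' a) - (Q b - Q' b)\<bar> \<le> C + C'"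
    by linarith
qed

lemma qm_word_pow_mult:
  assumes "periodic_word d R a" and "qm_defect_le d R Q C"
  shows "\<bar>Q (word_pow a (m * n)) - real m * Q (word_pow a n)\<bar> \<le> (real m + 1) * C"
proof (induction m)
  case 0
  then show ?case using qm_defect_leD[OF assms(2), of "[]" "[]"] by (simp add: word_pow_def)
next
  case (Suc m)
  have "\<bar>Q (word_pow a n @ word_pow a (m * n)) - Q (word_pow a n) - Q (word_pow a (m * n))\<bar> \<le> C"
    using assms by (metis qm_defect_leD word_pow_add word_pow_in_words)
  then have "\<bar>Q (word_pow a (Suc m * n)) - Q (word_pow a n) - Q (word_pow a (m * n))\<bar> \<le> C"
    by (simp add: word_pow_add)
  with Suc show ?case by (simp add: algebra_simps abs_le_iff)
qed

lemma qm_word_pow_quotient_bound: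
  assumes "periodic_word d R a" and "qm_defect_le d R Q C" and "k \<ge> 1" and "n \<ge> 1"
  shows "\<bar>Q (word_pow a (k * n)) / real (k * n) - Q (word_pow a n) / real n\<bar> \<le> 2 * C / real n"
proof -
  have kn: "real k \<ge> 1" "real n \<ge> 1" using assms(3,4) by auto
  have "\<bar>Q (word_pow a (k * n)) / real (k * n) - Q (word_pow a n) / real n\<bar>
      = \<bar>Q (word_pow a (k * n)) - real k * Q (word_pow a n)\<bar> / (real k * real n)"
    using kn by (simp add: field_simps abs_divide)
  also have "\<dots> \<le> (real k + 1) * C / (real k * real n)"
    using qm_word_pow_mult[OF assms(1,2)] by (rule divide_right_mono) simp
  also have "\<dots> = ((real k + 1) / real k) * (C / real n)"
    by simp
  also have "\<dots> \<le> 2 * (C / real n)"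
    using kn qm_defect_le_nonneg[OF assms(2)] by (intro mult_right_mono) (simp_all add: field_simps)
  finally show ?thesis by simp
qed

lemma qm_word_pow_quotient_convergent:
  assumes "periodic_word d R a" and "qm_defect_le d R Q C"
  shows "convergent (\<lambda>k. Q (word_pow a k) / real k)" (is "convergent ?X")
proof -
  have "Cauchy ?X"
  proof (rule metric_CauchyI)
    fix e :: real assume "e > 0"
    obtain N :: nat where N: "4 * C / e < real N" using reals_Archimedean2 by blast
    define \<delta> where "\<delta> = 2 * C / real (Suc N)"
    have "2 * \<delta> < e"
      using N \<open>e > 0\<close> unfolding \<delta>_def by (simp add: pos_divide_less_eq field_simps)
    have "dist (?X m) (?X n) < e" if "m \<ge> Suc N" "n \<ge> Suc N" for m n
    proof -
      have "\<bar>?X (m * n) - ?X n\<bar> \<le> 2 * C / real n" "\<bar>?X (n * m) - ?X m\<bar> \<le> 2 * C / real m"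
        using that qm_word_pow_quotient_bound[OF assms] by simp_all
      moreover have "2 * C / real n \<le> \<delta>" "2 * C / real m \<le> \<delta>"
        using that qm_defect_le_nonneg[OF assms(2)] unfolding \<delta>_def by (auto intro!: divide_left_mono)
      ultimately have "\<bar>?X (m * n) - ?X n\<bar> \<le> \<delta>" "\<bar>?X (m * n) - ?X m\<bar> \<le> \<delta>"
        by (simp_all add: mult.commute)
      with \<open>2 * \<delta> < e\<close> show ?thesis unfolding dist_real_def by linarith
    qed
    then show "\<exists>M. \<forall>m\<ge>M. \<forall>n\<ge>M. dist (?X m) (?X n) < e" by blast
  qed
  then show ?thesis by (simp add: Cauchy_convergent_iff)
qed

lemma Lbar_LIMSEQ:
  assumes "periodic_word d R a" and "quasimorphism d R Q"
  shows "(\<lambda>k. Q (word_pow a k) / real k) \<longlonglongrightarrow> Lbar Q a"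
  using assms qm_word_pow_quotient_convergent
  unfolding quasimorphism_iff_defect_le Lbar_def by (blast intro: convergent_LIMSEQ_iff[THEN iffD1])

lemma Lbar_approx_le:
  assumes "periodic_word d R a" and "qm_defect_le d R Q C"
  shows "\<bar>Lbar Q a - Q a\<bar> \<le> 2 * C"
proof -
  have "(\<lambda>k. Q (word_pow a k) / real k) \<longlonglongrightarrow> Lbar Q a"
    using Lbar_LIMSEQ assms quasimorphism_iff_defect_le by blast
  then have "(\<lambda>k. \<bar>Q (word_pow a k) / real k - Q a\<bar>) \<longlonglongrightarrow> \<bar>Lbar Q a - Q a\<bar>"
    by (intro tendsto_intros)
  moreover have "\<bar>Q (word_pow a k) / real k - Q a\<bar> \<le> 2 * C" if "k \<ge> 1" for k
    using qm_word_pow_quotient_bound[OF assms that, of 1] by (simp add: word_pow_def)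
  ultimately show ?thesis by (blast intro: LIMSEQ_le_const2)
qed

lemma Lbar_diff:
  assumes "periodic_word d R a" and "quasimorphism d R Q" and "quasimorphism d R Q'"
  shows "Lbar (\<lambda>w. Q w - Q' w) a = Lbar Q a - Lbar Q' a"
proof -
  have "(\<lambda>k. Q (word_pow a k) / real k - Q' (word_pow a k) / real k) \<longlonglongrightarrow> Lbar Q a - Lbar Q' a"
    using assms by (intro tendsto_diff Lbar_LIMSEQ)
  then show ?thesis unfolding Lbar_def by (simp add: diff_divide_distrib limI)
qed

lemma Lbar_eq_0_if_bounded:
  assumes "periodic_word d R a" and "\<forall>w \<in> words d R. \<bar>Q w\<bar> \<le> K"
  shows "Lbar Q a = 0"
proof -
  have "\<bar>Q (word_pow a k)\<bar> \<le> \<bar>K\<bar>" for k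
    using assms word_pow_in_words by (meson abs_ge_self order_trans)
  then have "\<forall>\<^sub>F k in sequentially. norm (Q (word_pow a k) / real k) \<le> norm (K / real k) * 1"
    by (auto intro!: always_eventually divide_right_mono simp: abs_divide)
  then have "(\<lambda>k. Q (word_pow a k) / real k) \<longlonglongrightarrow> 0"
    by (rule tendsto_0_le[OF lim_const_over_n])
  then show ?thesis unfolding Lbar_def by (rule limI)
qed

lemma qm_bounded_if_bounded_on_periodic:
  assumes "irreducible_mat d R" and "qm_defect_le d R Q C"
    and B: "\<forall>a. periodic_word d R a \<longrightarrow> \<bar>Q a\<bar> \<le> B"
  shows "\<exists>K. \<forall>w \<in> words d R. \<bar>Q w\<bar> \<le> K"
proof -
  obtain conn where conn: "\<forall>i \<in> alphabet d. \<forall>j \<in> alphabet d. allowed d R (i # conn i j @ [j])"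
    using irreducible_connecting_word[OF assms(1)] by metis
  define M where "M = Max ((\<lambda>(i, j). \<bar>Q (conn i j)\<bar>) ` (alphabet d \<times> alphabet d))"
  have "\<bar>Q w\<bar> \<le> max C (B + M + C)" if w: "w \<in> words d R" for w
  proof (cases "w = []")
    case True
    then show ?thesis using qm_defect_leD[OF assms(2), of "[]" "[]"] by simp
  next
    case False
    let ?u = "conn (last w) (hd w)"
    have "last w \<in> alphabet d" "hd w \<in> alphabet d"
      using w False by (auto simp: words_def allowed_def)
    then have u: "allowed d R (last w # ?u @ [hd w])" and "\<bar>Q ?u\<bar> \<le> M"
      using conn unfolding M_def by (auto intro!: Max_ge simp: alphabet_def)
    moreover have "\<bar>Q (w @ ?u)\<bar> \<le> B" and "\<bar>Q (w @ ?u) - Q w - Q ?u\<bar> \<le> C"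
      using periodic_word_append_connecting[OF w False u] B qm_defect_leD[OF assms(2) w]
      by (auto simp: periodic_word_def)
    ultimately show ?thesis by linarith
  qed
  then show ?thesis by blast
qed

lemma qm_bounded_iff_bounded_on_periodic:
  assumes "irreducible_mat d R" and "quasimorphism d R Q"
  shows "(\<exists>K. \<forall>w \<in> words d R. \<bar>Q w\<bar> \<le> K) \<longleftrightarrow> (\<exists>B. \<forall>a. periodic_word d R a \<longrightarrow> \<bar>Q a\<bar> \<le> B)"
  using assms qm_bounded_if_bounded_on_periodic
  unfolding quasimorphism_iff_defect_le periodic_word_def by blast

lemma qm_bounded_iff_Lbar_eq_0:
  assumes "irreducible_mat d R" and "quasimorphism d R Q"
  shows "(\<exists>K. \<forall>w \<in> words d R. \<bar>Q w\<bar> \<le> K) \<longleftrightarrow> (\<forall>a. periodic_word d R a \<longrightarrow> Lbar Q a = 0)"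
proof
  assume "\<exists>K. \<forall>w \<in> words d R. \<bar>Q w\<bar> \<le> K"
  then show "\<forall>a. periodic_word d R a \<longrightarrow> Lbar Q a = 0" using Lbar_eq_0_if_bounded by blast
next
  assume Lbar_0: "\<forall>a. periodic_word d R a \<longrightarrow> Lbar Q a = 0"
  obtain C where C: "qm_defect_le d R Q C" using assms(2) quasimorphism_iff_defect_le by blast
  have "\<forall>a. periodic_word d R a \<longrightarrow> \<bar>Q a\<bar> \<le> 2 * C"
    using Lbar_approx_le[OF _ C] Lbar_0 by fastforce
  then show "\<exists>K. \<forall>w \<in> words d R. \<bar>Q w\<bar> \<le> K"
    by (rule qm_bounded_if_bounded_on_periodic[OF assms(1) C])
qed

theorem mainTheorem9:
  fixes d :: nat and R :: "nat \<Rightarrow> nat \<Rightarrow> bool" and L L' :: "nat list \<Rightarrow> real"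
  assumes "irreducible_mat d R" and "aperiodic_mat d R"
    and "quasimorphism d R L" and "quasimorphism d R L'"
  shows "(qm_equiv d R L L' \<longleftrightarrow> (\<forall>a. periodic_word d R a \<longrightarrow> Lbar L a = Lbar L' a))
       \<and> (qm_equiv d R L L' \<longleftrightarrow>
            (\<exists>C. \<forall>a. periodic_word d R a \<longrightarrow> \<bar>L a - L' a\<bar> \<le> C))"
proof -
  define D where "D = (\<lambda>w. L w - L' w)"
  have D: "quasimorphism d R D"
    using assms(3,4) qm_defect_le_diff unfolding D_def quasimorphism_iff_defect_le by blast
  have equiv_iff: "qm_equiv d R L L' \<longleftrightarrow> (\<exists>K. \<forall>w \<in> words d R. \<bar>D w\<bar> \<le> K)"
    unfolding qm_equiv_def D_def ..
  have "Lbar D a = 0 \<longleftrightarrow> Lbar L a = Lbar L' a" if "periodic_word d R a" for a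
    using Lbar_diff[OF that assms(3,4)] unfolding D_def by simp
  then have "qm_equiv d R L L' \<longleftrightarrow> (\<forall>a. periodic_word d R a \<longrightarrow> Lbar L a = Lbar L' a)"
    using qm_bounded_iff_Lbar_eq_0[OF assms(1) D] unfolding equiv_iff by blast
  moreover have "qm_equiv d R L L' \<longleftrightarrow> (\<exists>C. \<forall>a. periodic_word d R a \<longrightarrow> \<bar>L a - L' a\<bar> \<le> C)"
    using qm_bounded_iff_bounded_on_periodic[OF assms(1) D] unfolding equiv_iff D_def .
  ultimately show ?thesis ..
qed

end
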